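(* Let $\mathfrak g$ be a finite-dimensional complex Lie algebra, $a\in\mathfrak g^*$, $U\subset\mathfrak g^*$ open, and $\lambda:U\to\mathbb C$ a (locally analytic) function such that for every $x\in U$, $\lambda(x)$ is an eigenvalue of the pencil $\mathcal A_x+\mu\mathcal A_a$. Then $\lambda$ is not constant on any neighbourhood of any point of $U$.
   Context: For $x\in\mathfrak g^*$, $\mathcal A_x$ is the skew form $(\xi,\eta)\mapsto\langle x,[\xi,\eta]\rangle$ on $\mathfrak g$. A number $\lambda_0\in\mathbb C$ is an eigenvalue (characteristic number) of the pencil $\mathcal A_x+\mu\mathcal A_a$ if $\operatorname{rk}(\mathcal A_x-\lambda_0\mathcal A_a)<\max_{\mu}\operatorname{rk}(\mathcal A_x+\mu\mathcal A_a)$, i.e. it is the eigenvalue of a Jordan block in the Jordan–Kronecker decomposition of the pair $(\mathcal A_x,\mathcal A_a)$. *)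

theory Defs
  imports "HOL-Analysis.Analysis"
begin

text \<open>The Lie algebra g is modelled as complex^'n (a finite index type 'n, so dim g = CARD('n)),
  with a bracket br. The dual space g* is identified with complex^'n through the
  (complex-bilinear, non-conjugated) pairing below.\<close>

definition pair :: "complex^'n \<Rightarrow> complex^'n \<Rightarrow> complex" where
  "pair x v = (\<Sum>i\<in>UNIV. x$i * v$i)"

definition lie_algebra :: "(complex^'n \<Rightarrow> complex^'n \<Rightarrow> complex^'n) \<Rightarrow> bool" where
  "lie_algebra br \<longleftrightarrow>
     (\<forall>x y z. br (x + y) z = br x z + br y z) \<and>
     (\<forall>(c::complex) x y. br (c *s x) y = c *s br x y) \<and>
     (\<forall>x y. br x y = - br y x) \<and>
     (\<forall>x y z. br x (br y z) + br y (br z x) + br z (br x y) = 0)"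

text \<open>Gram matrix of the skew form A_x(xi,eta) = <x,[xi,eta]> in the standard basis.\<close>
definition form_mat :: "(complex^'n \<Rightarrow> complex^'n \<Rightarrow> complex^'n) \<Rightarrow> complex^'n \<Rightarrow> complex^'n^'n" where
  "form_mat br x = (\<chi> i j. pair x (br (axis i 1) (axis j 1)))"

definition pencil_mat :: "(complex^'n \<Rightarrow> complex^'n \<Rightarrow> complex^'n) \<Rightarrow> complex^'n \<Rightarrow> complex^'n \<Rightarrow> complex \<Rightarrow> complex^'n^'n" where
  "pencil_mat br x a \<mu> = (\<chi> i j. form_mat br x $ i $ j + \<mu> * form_mat br a $ i $ j)"

definition pencil_eigenvalue :: "(complex^'n \<Rightarrow> complex^'n \<Rightarrow> complex^'n) \<Rightarrow> complex^'n \<Rightarrow> complex^'n \<Rightarrow> complex \<Rightarrow> bool" where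
  "pencil_eigenvalue br x a lam0 \<longleftrightarrow>
     rank (pencil_mat br x a (- lam0)) < Max (range (\<lambda>\<mu>. rank (pencil_mat br x a \<mu>)))"

definition complex_linear :: "(complex^'n \<Rightarrow> complex) \<Rightarrow> bool" where
  "complex_linear L \<longleftrightarrow> (\<forall>u v. L (u + v) = L u + L v) \<and> (\<forall>(c::complex) v. L (c *s v) = c * L v)"

text \<open>Holomorphic (= locally analytic, by Osgood/Hartogs) on an open set of C^n:
  complex-Frechet differentiable at every point.\<close>
definition holomorphic_several :: "(complex^'n \<Rightarrow> complex) \<Rightarrow> (complex^'n) set \<Rightarrow> bool" where
  "holomorphic_several f U \<longleftrightarrow> (\<forall>x\<in>U. \<exists>L. complex_linear L \<and> (f has_derivative L) (at x))"

end

theory Submission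
  imports Defs "HOL-Complex_Analysis.Complex_Analysis"
begin

text \<open>If lam were constantly c near x, the form A_(y - c a) would have rank below
  the generic rank of z \<mapsto> A_z for all y in an open set. But on the complex line through
  any point and a point z0 of maximal rank, the rank is bounded below by the nonvanishing of
  one determinant: that of the rows of a maximal independent set of rows at z0, completed
  by constant rows to a basis. This determinant is polynomial in the line parameter and
  nonzero at z0, hence nonzero somewhere in every open set.\<close>

lemma card_le_rank_if_rows_of_nonsingular:
  fixes M N :: "'a::field^'n^'n"
  assumes "det N \<noteq> 0" and "\<And>k. k \<in> S \<Longrightarrow> row k N = row k M"
  shows "card S \<le> rank M"
proof -
  have "inj (\<lambda>k. row k N)"
    using det_identical_rows assms(1) by (metis injI)
  then have "card S = card ((\<lambda>k. row k N) ` S)"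
    by (simp add: card_image inj_on_subset)
  also have "\<dots> \<le> rank M"
    unfolding row_rank_def_gen
  proof (rule vec.independent_card_le_dim)
    show "(\<lambda>k. row k N) ` S \<subseteq> rows M"
      using assms(2) by (auto simp: rows_def)
    have "vec.independent (rows N)"
      using det_dependent_rows assms(1) by blast
    then show "vec.independent ((\<lambda>k. row k N) ` S)"
      by (rule vec.independent_mono) (auto simp: rows_def)
  qed
  finally show ?thesis .
qed

lemma nonsingular_row_completion:
  fixes M :: "'a::field^'n^'n"
  obtains S g where "rank M \<le> card S" and "det (\<chi> k. if k \<in> S then row k M else g k) \<noteq> 0"
proof -
  obtain B where B: "B \<subseteq> rows M" "vec.independent B" "rows M \<subseteq> vec.span B"
    using vec.maximal_independent_subset by blast
  have finB: "finite B"
    using B(2) vec.finiteI_independent by blast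
  have cardB: "card B = rank M"
    unfolding row_rank_def_gen using vec.basis_card_eq_dim[OF B(1) B(3) B(2)] .
  define idx where "idx b = (SOME k. b = row k M)" for b
  have row_idx: "row (idx b) M = b" if "b \<in> B" for b
  proof -
    have "\<exists>k. b = row k M"
      using that B(1) by (auto simp: rows_def)
    then show ?thesis
      using someI_ex unfolding idx_def by (metis (mono_tags))
  qed
  define S where "S = idx ` B"
  have "inj_on idx B"
    by (metis row_idx inj_onI)
  then have cardS: "card S = rank M"
    unfolding S_def using card_image cardB by metis
  have rows_S: "(\<lambda>k. row k M) ` S = B"
    unfolding S_def using row_idx by (auto simp: image_iff)
  define C where "C = vec.extend_basis B"
  have C: "B \<subseteq> C" "vec.independent C" "vec.span C = UNIV"
    using B(2) unfolding C_def
    by (auto simp: vec.extend_basis_superset vec.independent_extend_basis)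
  have "card C = CARD('n)"
    using vec.basis_card_eq_dim[of C UNIV] C vec_dim_card by auto
  moreover have "finite C"
    using C(2) vec.finiteI_independent by blast
  ultimately have "card (- S) = card (C - B)"
    using card_Diff_subset[OF finB C(1)] card_Diff_subset[of S UNIV] cardB cardS
    by (simp add: Compl_eq_Diff_UNIV)
  then obtain g where g: "bij_betw g (- S) (C - B)"
    using finite_same_card_bij[of "- S" "C - B"] \<open>finite C\<close> by auto
  define N where "N = (\<chi> k. if k \<in> S then row k M else g k)"
  have "rows N = (\<lambda>k. row k M) ` S \<union> g ` (- S)"
    unfolding rows_def N_def by (auto simp: row_def)
  also have "\<dots> = C"
    using rows_S g C(1) by (auto simp: bij_betw_def)
  finally have "vec.span (rows N) = UNIV"
    using C(3) by simp
  then have "det N \<noteq> 0"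
    using matrix_left_invertible_span_rows_gen[of N]
    by (simp add: invertible_det_nz[symmetric] invertible_left_inverse)
  then show ?thesis
    using that[of S g] cardS N_def by simp
qed

lemma holomorphic_on_det:
  fixes M :: "complex \<Rightarrow> complex^'n^'n"
  assumes "\<And>i j. (\<lambda>t. M t $ i $ j) holomorphic_on D"
  shows "(\<lambda>t. det (M t)) holomorphic_on D"
  unfolding det_def by (intro holomorphic_intros assms)

lemma holomorphic_matrix_rank_attained_in_open:
  fixes M :: "complex \<Rightarrow> complex^'n^'n"
  assumes hol: "\<And>i j. (\<lambda>t. M t $ i $ j) holomorphic_on D"
    and "open D" "connected D" "open T" "T \<noteq> {}" "T \<subseteq> D" "t0 \<in> D"
  obtains t where "t \<in> T" "rank (M t0) \<le> rank (M t)"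
proof -
  obtain S g where S: "rank (M t0) \<le> card S"
    and det_t0: "det (\<chi> k. if k \<in> S then row k (M t0) else g k) \<noteq> 0"
    by (rule nonsingular_row_completion)
  define N where "N t = (\<chi> k. if k \<in> S then row k (M t) else g k)" for t
  have "(\<lambda>t. det (N t)) holomorphic_on D"
  proof (rule holomorphic_on_det)
    fix i j
    show "(\<lambda>t. N t $ i $ j) holomorphic_on D"
      by (cases "i \<in> S") (simp_all add: N_def row_def hol)
  qed
  then obtain t where "t \<in> T" "det (N t) \<noteq> 0"
    using analytic_continuation_open[of T D "\<lambda>t. det (N t)" "\<lambda>_. 0" t0] assms det_t0
    unfolding N_def by auto
  moreover have "card S \<le> rank (M t)" if "det (N t) \<noteq> 0" for t
    using card_le_rank_if_rows_of_nonsingular[OF that] by (simp add: N_def row_def)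
  ultimately show ?thesis
    using S that le_trans by blast
qed

lemma finite_range_rank: "finite (range (\<lambda>z. rank (F z :: 'a::field^'n^'m)))"
  by (rule finite_subset[of _ "{..CARD('n)}"]) (auto simp: row_rank_def_gen dim_subset_UNIV_cart_gen)

lemma rank_maximum_exists:
  fixes F :: "'b \<Rightarrow> 'a::field^'n^'m"
  obtains z0 where "\<And>z. rank (F z) \<le> rank (F z0)"
proof -
  have "Max (range (\<lambda>z. rank (F z))) \<in> range (\<lambda>z. rank (F z))"
    by (rule Max_in) (auto simp: finite_range_rank)
  then obtain z0 where "Max (range (\<lambda>z. rank (F z))) = rank (F z0)"
    by auto
  then show ?thesis
    using that[of z0] Max_ge[OF finite_range_rank[of F]] by auto
qed

lemma form_mat_add_scale:
  "form_mat br (x + t *s w) = (\<chi> i j. form_mat br x $ i $ j + t * form_mat br w $ i $ j)"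
  unfolding form_mat_def pair_def
  by (simp add: vec_eq_iff sum.distrib distrib_right sum_distrib_left mult.assoc)

lemma pencil_mat_eq_form_mat: "pencil_mat br x a \<mu> = form_mat br (x + \<mu> *s a)"
  unfolding pencil_mat_def form_mat_add_scale ..

lemma form_mat_max_rank_in_open:
  assumes "open V" "x \<in> V"
  obtains y where "y \<in> V" "\<And>z. rank (form_mat br z) \<le> rank (form_mat br y)"
proof -
  obtain z0 where z0: "\<And>z. rank (form_mat br z) \<le> rank (form_mat br z0)"
    using rank_maximum_exists[of "form_mat br"] by blast
  define line where "line t = x + t *s (z0 - x)" for t
  have "line = (\<lambda>t. \<chi> i. x $ i + t * (z0 - x) $ i)"
    by (simp add: line_def vec_eq_iff fun_eq_iff right_diff_distrib)
  then have "continuous_on UNIV line"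
    by (auto intro!: continuous_intros)
  then have "open (line -` V)"
    using open_vimage assms(1) by blast
  moreover have "0 \<in> line -` V"
    using assms(2) by (simp add: line_def)
  moreover have "(\<lambda>t. form_mat br (line t) $ i $ j) holomorphic_on UNIV" for i j
    unfolding line_def form_mat_add_scale by (auto intro!: holomorphic_intros)
  ultimately obtain t where "line t \<in> V" "rank (form_mat br (line 1)) \<le> rank (form_mat br (line t))"
    using holomorphic_matrix_rank_attained_in_open[of "\<lambda>t. form_mat br (line t)" UNIV "line -` V" 1]
    by blast
  moreover have "line 1 = z0"
    by (simp add: line_def)
  ultimately show ?thesis
    using that z0 order_trans by metis
qed

lemma pencil_eigenvalue_rank_drop:
  assumes "pencil_eigenvalue br x a c"
  obtains z where "rank (form_mat br (x - c *s a)) < rank (form_mat br z)"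
proof -
  obtain \<mu> where "\<And>\<nu>. rank (pencil_mat br x a \<nu>) \<le> rank (pencil_mat br x a \<mu>)"
    using rank_maximum_exists[of "pencil_mat br x a"] by blast
  then have "Max (range (\<lambda>\<nu>. rank (pencil_mat br x a \<nu>))) = rank (pencil_mat br x a \<mu>)"
    by (intro Max_eqI) (auto simp: finite_range_rank)
  moreover have "x + (- c) *s a = x - c *s a"
    by (simp add: vector_smult_lneg)
  ultimately show ?thesis
    using assms that[of "x + \<mu> *s a"]
    unfolding pencil_eigenvalue_def pencil_mat_eq_form_mat by simp
qed

theorem lemma2:
  fixes br :: "complex^'n \<Rightarrow> complex^'n \<Rightarrow> complex^'n"
    and a :: "complex^'n" and U :: "(complex^'n) set" and lam :: "complex^'n \<Rightarrow> complex"
  assumes "lie_algebra br"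
    and "open U"
    and "holomorphic_several lam U"
    and "\<forall>x\<in>U. pencil_eigenvalue br x a (lam x)"
  shows "\<forall>x\<in>U. \<not> (\<exists>V c. open V \<and> x \<in> V \<and> V \<subseteq> U \<and> (\<forall>y\<in>V. lam y = c))"
proof (intro ballI notI)
  fix x0
  assume "\<exists>V c. open V \<and> x0 \<in> V \<and> V \<subseteq> U \<and> (\<forall>y\<in>V. lam y = c)"
  then obtain V c where V: "open V" "x0 \<in> V" "V \<subseteq> U" and const: "\<And>y. y \<in> V \<Longrightarrow> lam y = c"
    by blast
  have "open ((\<lambda>y. y - c *s a) ` V)"
    using V(1) by (rule open_translation_subtract)
  moreover have "x0 - c *s a \<in> (\<lambda>y. y - c *s a) ` V"
    using V(2) by blast
  ultimately obtain y where "y \<in> V" and max: "\<And>z. rank (form_mat br z) \<le> rank (form_mat br (y - c *s a))"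
    by (metis (no_types, lifting) form_mat_max_rank_in_open imageE)
  then have "pencil_eigenvalue br y a c"
    using assms(4) V(3) const by auto
  then obtain z where "rank (form_mat br (y - c *s a)) < rank (form_mat br z)"
    by (rule pencil_eigenvalue_rank_drop)
  with max show False
    using not_le by blast
qed

end
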